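(* For every maximum-weight perfect matching $M^*$ of $G$, the induced allocation $X$ is EF1.
   Context: Setting: $n$ agents, $m$ real items $\mathcal M$, restricted additive valuations: there are values $v(g)>0$ with $v_{i,g}\in\{0,v(g)\}$ and $v_i(S)=\sum_{g\in S}v_{i,g}$; every real item is valued positively by at least one agent. Let $u_1>u_2>\dots>u_t$ be the distinct values in $\{v(g):g\in\mathcal M\}$ and $\mathcal M_f=\{g:v(g)=u_f\}$. Add a set $\mathcal M_d$ of $mn-m$ dummy items valued $0$ by all agents. The bipartite graph $G$ has left side $A=\{a_g: g\in\mathcal M\cup\mathcal M_d\}$ ($mn$ vertices) and right side $B=\{b_{(i,c)}: i\in[n], c\in[m]\}$; the set $\mathcal N_c=\{b_{(i,c)}:i\in[n]\}$ is called bucket $c$. Edges: for each real $g\in\mathcal M_f$, each agent $i$ with $v_{i,g}>0$ and each $c\in[m]$, an edge $(a_g,b_{(i,c)})$ of weight $-m^{t-f}\cdot c$; for each dummy $g$ and all $i,c$, an edge $(a_g,b_{(i,c)})$ of weight $0$; no other edges. The allocation induced by a perfect matching $M$ is $X_i=\{g\in\mathcal M: a_g \text{ matched in } M \text{ to some } b_{(i,c)}\}$. $X$ is EF1 if for all agents $i,j$ either $v_i(X_i)\ge v_i(X_j)$ or there is $g\in X_j$ with $v_i(X_i)\ge v_i(X_j\setminus\{g\})$. *)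

theory Defs
  imports Complex_Main
begin

text \<open>Agents are 0..<n, real items are 0..<m, dummy items are m..<m*n.
  Right vertices are pairs (i,c) with i < n and c in {1..m} (bucket c).\<close>

definition val :: "(nat \<Rightarrow> nat \<Rightarrow> bool) \<Rightarrow> (nat \<Rightarrow> real) \<Rightarrow> nat \<Rightarrow> nat \<Rightarrow> real" where
  "val likes vv i g = (if likes i g then vv g else 0)"

definition bundle_val :: "(nat \<Rightarrow> nat \<Rightarrow> bool) \<Rightarrow> (nat \<Rightarrow> real) \<Rightarrow> nat \<Rightarrow> nat set \<Rightarrow> real" where
  "bundle_val likes vv i S = (\<Sum>g\<in>S. val likes vv i g)"

text \<open>Number of distinct item values t, and the index f(g) of v(g) in the
  descending list u_1 > ... > u_t of distinct values (1-based).\<close>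
definition num_values :: "nat \<Rightarrow> (nat \<Rightarrow> real) \<Rightarrow> nat" where
  "num_values m vv = card (vv ` {0..<m})"

definition value_index :: "nat \<Rightarrow> (nat \<Rightarrow> real) \<Rightarrow> nat \<Rightarrow> nat" where
  "value_index m vv g = card {u \<in> vv ` {0..<m}. vv g \<le> u}"

definition left_vertices :: "nat \<Rightarrow> nat \<Rightarrow> nat set" where
  "left_vertices n m = {0..<m*n}"

definition right_vertices :: "nat \<Rightarrow> nat \<Rightarrow> (nat \<times> nat) set" where
  "right_vertices n m = {0..<n} \<times> {1..m}"

definition edges :: "nat \<Rightarrow> nat \<Rightarrow> (nat \<Rightarrow> nat \<Rightarrow> bool) \<Rightarrow> (nat \<times> (nat \<times> nat)) set" where
  "edges n m likes =
     {(g, (i, c)). g < m \<and> i < n \<and> c \<in> {1..m} \<and> likes i g}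
   \<union> {(g, (i, c)). m \<le> g \<and> g < m*n \<and> i < n \<and> c \<in> {1..m}}"

definition edge_weight :: "nat \<Rightarrow> (nat \<Rightarrow> real) \<Rightarrow> nat \<times> (nat \<times> nat) \<Rightarrow> real" where
  "edge_weight m vv e = (case e of (g, (i, c)) \<Rightarrow>
     (if g < m then - ((real m) ^ (num_values m vv - value_index m vv g) * real c) else 0))"

definition matching_weight :: "nat \<Rightarrow> (nat \<Rightarrow> real) \<Rightarrow> (nat \<times> (nat \<times> nat)) set \<Rightarrow> real" where
  "matching_weight m vv M = (\<Sum>e\<in>M. edge_weight m vv e)"

definition perfect_matching :: "nat \<Rightarrow> nat \<Rightarrow> (nat \<Rightarrow> nat \<Rightarrow> bool) \<Rightarrow> (nat \<times> (nat \<times> nat)) set \<Rightarrow> bool" where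
  "perfect_matching n m likes M \<longleftrightarrow>
     M \<subseteq> edges n m likes \<and>
     (\<forall>a\<in>left_vertices n m. \<exists>!b. (a, b) \<in> M) \<and>
     (\<forall>b\<in>right_vertices n m. \<exists>!a. (a, b) \<in> M)"

definition max_weight_perfect_matching ::
  "nat \<Rightarrow> nat \<Rightarrow> (nat \<Rightarrow> nat \<Rightarrow> bool) \<Rightarrow> (nat \<Rightarrow> real) \<Rightarrow> (nat \<times> (nat \<times> nat)) set \<Rightarrow> bool" where
  "max_weight_perfect_matching n m likes vv M \<longleftrightarrow>
     perfect_matching n m likes M \<and>
     (\<forall>M'. perfect_matching n m likes M' \<longrightarrow> matching_weight m vv M' \<le> matching_weight m vv M)"

definition induced_alloc :: "nat \<Rightarrow> (nat \<times> (nat \<times> nat)) set \<Rightarrow> nat \<Rightarrow> nat set" where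
  "induced_alloc m M i = {g. g < m \<and> (\<exists>c. (g, (i, c)) \<in> M)}"

definition EF1 :: "nat \<Rightarrow> (nat \<Rightarrow> nat \<Rightarrow> bool) \<Rightarrow> (nat \<Rightarrow> real) \<Rightarrow> (nat \<Rightarrow> nat set) \<Rightarrow> bool" where
  "EF1 n likes vv X \<longleftrightarrow>
     (\<forall>i<n. \<forall>j<n.
        bundle_val likes vv i (X i) \<ge> bundle_val likes vv i (X j) \<or>
        (\<exists>g\<in>X j. bundle_val likes vv i (X i) \<ge> bundle_val likes vv i (X j - {g})))"

end

theory Submission
  imports Defs
begin

text \<open>
  The weights are lexicographic: an edge of a real item in bucket c weighs
  -m^(t-f) * c, so moving an item of value index f down by one bucket gains more than
  moving any strictly less valuable item up by up to m-1 buckets loses.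
  In a maximum-weight perfect matching this forces, for agents i \<noteq> j: if j holds in
  bucket c+1 an item h that i likes, then i holds in bucket c a real item of value at
  least v(h); otherwise an exchange along a 2-cycle (swapping h with a dummy of i) or a
  3-cycle (through a dummy bucket of i) would increase the weight. Sending h to that
  item of i is injective, so i values j's bundle minus its bucket-1 item at most as
  much as her own.
\<close>

lemma edges_iff:
  "(g, (i, c)) \<in> edges n m likes \<longleftrightarrow>
     i < n \<and> c \<in> {1..m} \<and> (g < m \<and> likes i g \<or> m \<le> g \<and> g < m * n)"
  unfolding edges_def by auto

lemma edges_subset_vertices: "edges n m likes \<subseteq> left_vertices n m \<times> right_vertices n m"
proof
  fix e assume "e \<in> edges n m likes"
  then obtain g i c where "e = (g, (i, c))" "i < n" "c \<in> {1..m}" "g < m \<or> g < m * n"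
    unfolding edges_def by auto
  moreover have "g < m \<Longrightarrow> g < m * n" using \<open>i < n\<close> by (cases n) auto
  ultimately show "e \<in> left_vertices n m \<times> right_vertices n m"
    unfolding left_vertices_def right_vertices_def by auto
qed

lemma finite_edges: "finite (edges n m likes)"
  using edges_subset_vertices
  by (rule finite_subset) (simp add: left_vertices_def right_vertices_def)

lemma perfect_matching_iff:
  "perfect_matching n m likes M \<longleftrightarrow>
     M \<subseteq> edges n m likes \<and> single_valued M \<and> single_valued (M\<inverse>) \<and>
     left_vertices n m \<subseteq> Domain M \<and> right_vertices n m \<subseteq> Range M"
    (is "_ \<longleftrightarrow> ?E \<and> ?SV \<and> ?SV' \<and> ?L \<and> ?R")
proof
  assume pm: "perfect_matching n m likes M"
  then have E: ?E and L: "\<forall>a\<in>left_vertices n m. \<exists>!b. (a, b) \<in> M"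
    and R: "\<forall>b\<in>right_vertices n m. \<exists>!a. (a, b) \<in> M"
    unfolding perfect_matching_def by blast+
  have vertices: "a \<in> left_vertices n m" "b \<in> right_vertices n m" if "(a, b) \<in> M" for a b
    using that E edges_subset_vertices by blast+
  have ?SV
  proof (rule single_valuedI)
    fix a b b' assume "(a, b) \<in> M" "(a, b') \<in> M"
    then show "b = b'" using L vertices(1) by blast
  qed
  moreover have ?SV'
  proof (rule single_valuedI)
    fix b a a' assume "(b, a) \<in> M\<inverse>" "(b, a') \<in> M\<inverse>"
    then show "a = a'" using R vertices(2) by blast
  qed
  ultimately show "?E \<and> ?SV \<and> ?SV' \<and> ?L \<and> ?R"
    using E L R by blast
next
  assume "?E \<and> ?SV \<and> ?SV' \<and> ?L \<and> ?R"
  then show "perfect_matching n m likes M"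
    unfolding perfect_matching_def single_valued_def by blast
qed

lemma perfect_matching_edge:
  assumes "perfect_matching n m likes M" "(g, (i, c)) \<in> M"
  shows "i < n \<and> c \<in> {1..m} \<and> (g < m \<and> likes i g \<or> m \<le> g \<and> g < m * n)"
  using assms edges_iff by (auto simp: perfect_matching_iff)

lemma perfect_matching_bucket_matched:
  assumes "perfect_matching n m likes M" "i < n" "c \<in> {1..m}"
  obtains g where "(g, (i, c)) \<in> M"
proof -
  have "(i, c) \<in> Range M"
    using assms by (auto simp: perfect_matching_iff right_vertices_def)
  then show ?thesis using that by blast
qed

lemma Domain_exchange_disjoint:
  assumes "single_valued M" "R \<subseteq> M" "Domain A = Domain R"
  shows "Domain (M - R) \<inter> Domain A = {}"
proof (intro equalityI subsetI)
  fix a assume "a \<in> Domain (M - R) \<inter> Domain A"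
  then obtain b b' where b: "(a, b) \<in> M" "(a, b) \<notin> R" and b': "(a, b') \<in> R"
    using assms(3) by (auto simp: Domain_iff)
  have "b = b'" using single_valuedD[OF assms(1) b(1)] b' assms(2) by blast
  then show "a \<in> {}" using b b' by simp
qed simp

lemma single_valued_exchange:
  assumes "single_valued M" "R \<subseteq> M" "Domain A = Domain R" "single_valued A"
  shows "single_valued (M - R \<union> A)"
proof (rule single_valuedI)
  fix a b b' assume ab: "(a, b) \<in> M - R \<union> A" and ab': "(a, b') \<in> M - R \<union> A"
  have "\<not> ((a, b) \<in> M - R \<and> (a, b') \<in> A)" "\<not> ((a, b) \<in> A \<and> (a, b') \<in> M - R)"
    using Domain_exchange_disjoint[OF assms(1-3)] by blast+
  then show "b = b'"
    using ab ab' single_valuedD[OF assms(1)] single_valuedD[OF assms(4)] by blast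
qed

lemma Domain_subset_exchange:
  assumes "Domain A = Domain R"
  shows "Domain M \<subseteq> Domain (M - R \<union> A)"
proof
  fix a assume "a \<in> Domain M"
  then obtain b where "(a, b) \<in> M" by blast
  then show "a \<in> Domain (M - R \<union> A)"
    using assms by (cases "(a, b) \<in> R") (auto simp flip: Domain_iff)
qed

lemma perfect_matching_exchange:
  assumes pm: "perfect_matching n m likes M" and RM: "R \<subseteq> M" and AE: "A \<subseteq> edges n m likes"
    and dom: "Domain A = Domain R" and ran: "Range A = Range R"
    and sv: "single_valued A" "single_valued (A\<inverse>)"
  shows "perfect_matching n m likes (M - R \<union> A)"
proof -
  have conv: "(M - R \<union> A)\<inverse> = M\<inverse> - R\<inverse> \<union> A\<inverse>" by auto
  have RM': "R\<inverse> \<subseteq> M\<inverse>" using RM by auto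
  have dom': "Domain (A\<inverse>) = Domain (R\<inverse>)" using ran by simp
  have "M - R \<union> A \<subseteq> edges n m likes" using pm RM AE by (auto simp: perfect_matching_iff)
  moreover have "single_valued (M - R \<union> A)"
    using single_valued_exchange[OF _ RM dom sv(1)] pm by (simp add: perfect_matching_iff)
  moreover have "single_valued ((M - R \<union> A)\<inverse>)"
    unfolding conv using single_valued_exchange[OF _ RM' dom' sv(2)] pm
    by (simp add: perfect_matching_iff)
  moreover have "left_vertices n m \<subseteq> Domain (M - R \<union> A)"
    using Domain_subset_exchange[OF dom, of M] pm by (auto simp: perfect_matching_iff)
  moreover have "right_vertices n m \<subseteq> Range (M - R \<union> A)"
    using Domain_subset_exchange[OF dom', of "M\<inverse>"] pm unfolding conv[symmetric]
    by (auto simp: perfect_matching_iff)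
  ultimately show ?thesis by (simp add: perfect_matching_iff)
qed

lemma matching_weight_exchange:
  assumes "perfect_matching n m likes M" "R \<subseteq> M" "A \<subseteq> edges n m likes" "Domain A = Domain R"
  shows "matching_weight m vv (M - R \<union> A) =
           matching_weight m vv M - matching_weight m vv R + matching_weight m vv A"
proof -
  have fin: "finite M" "finite A"
    using assms(1,3) finite_subset[OF _ finite_edges] by (auto simp: perfect_matching_iff)
  have "(M - R) \<inter> A = {}"
    using Domain_exchange_disjoint[OF _ assms(2,4)] assms(1) by (auto simp: perfect_matching_iff)
  then show ?thesis
    unfolding matching_weight_def
    using sum.union_disjoint[of "M - R" A "edge_weight m vv"] sum_diff[OF fin(1) assms(2)] fin
    by simp
qed

lemma max_weight_exchange_le:
  assumes max: "max_weight_perfect_matching n m likes vv M"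
    and "R \<subseteq> M" "A \<subseteq> edges n m likes" "Domain A = Domain R" "Range A = Range R"
    and "single_valued A" "single_valued (A\<inverse>)"
  shows "matching_weight m vv A \<le> matching_weight m vv R"
proof -
  have pm: "perfect_matching n m likes M"
    using max by (simp add: max_weight_perfect_matching_def)
  then have "perfect_matching n m likes (M - R \<union> A)"
    using perfect_matching_exchange assms(2-) by blast
  then have "matching_weight m vv (M - R \<union> A) \<le> matching_weight m vv M"
    using max by (simp add: max_weight_perfect_matching_def)
  then show ?thesis using matching_weight_exchange[OF pm assms(2-4)] by simp
qed

definition item_weight :: "nat \<Rightarrow> (nat \<Rightarrow> real) \<Rightarrow> nat \<Rightarrow> real" where
  "item_weight m vv g = real m ^ (num_values m vv - value_index m vv g)"

lemma edge_weight_eq: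
  "edge_weight m vv (g, (i, c)) = (if g < m then - (item_weight m vv g * real c) else 0)"
  by (simp add: edge_weight_def item_weight_def)

lemma item_weight_pos: "0 < m \<Longrightarrow> 0 < item_weight m vv g"
  by (simp add: item_weight_def)

lemma item_weight_gap:
  assumes "y < m" "h < m" "vv y < vv h"
  shows "real m * item_weight m vv y \<le> item_weight m vv h"
proof -
  have fin: "finite (vv ` {0..<m})" by simp
  have "{u \<in> vv ` {0..<m}. vv h \<le> u} \<subset> {u \<in> vv ` {0..<m}. vv y \<le> u}"
    using assms by force
  then have "value_index m vv h < value_index m vv y"
    unfolding value_index_def by (rule psubset_card_mono[rotated]) (use fin in auto)
  moreover have "value_index m vv y \<le> num_values m vv"
    unfolding value_index_def num_values_def by (rule card_mono[OF fin]) auto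
  ultimately have "Suc (num_values m vv - value_index m vv y) \<le> num_values m vv - value_index m vv h"
    by linarith
  then have "real m ^ Suc (num_values m vv - value_index m vv y) \<le> item_weight m vv h"
    unfolding item_weight_def by (rule power_increasing) (use assms in auto)
  then show ?thesis by (simp add: item_weight_def)
qed

lemma perfect_matching_dummy_bucket:
  assumes pm: "perfect_matching n m likes M" and "i < n"
    and h: "(h, (j, c)) \<in> M" "h < m" and "j \<noteq> i"
  obtains z d where "(z, (i, d)) \<in> M" "m \<le> z" "d \<in> {1..m}"
proof (rule ccontr)
  assume no_dummy: "\<not> thesis"
  \<comment> \<open>Then the m buckets of i hold m distinct real items, i.e. all of them, including h.\<close>
  define Q where "Q = M \<inter> (UNIV \<times> ({i} \<times> {1..m}))"
  have sv: "single_valued M" "single_valued (M\<inverse>)"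
    using pm by (auto simp: perfect_matching_iff)
  have snd_Q: "snd ` Q = {i} \<times> {1..m}"
  proof
    show "{i} \<times> {1..m} \<subseteq> snd ` Q"
    proof
      fix b assume "b \<in> {i} \<times> {1..m}"
      then obtain g where "(g, b) \<in> M"
        using perfect_matching_bucket_matched[OF pm \<open>i < n\<close>] by blast
      then show "b \<in> snd ` Q" using \<open>b \<in> _\<close> unfolding Q_def by force
    qed
  qed (auto simp: Q_def)
  have "inj_on snd Q"
    unfolding Q_def inj_on_def by (auto dest: single_valuedD[OF sv(2), simplified])
  moreover have "inj_on fst Q"
    unfolding Q_def inj_on_def by (auto dest: single_valuedD[OF sv(1)])
  ultimately have "card (fst ` Q) = card (snd ` Q)"
    by (simp add: card_image)
  also have "\<dots> = m" by (simp add: snd_Q card_cartesian_product)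
  finally have "card (fst ` Q) = m" .
  moreover have "fst ` Q \<subseteq> {0..<m}"
  proof
    fix z assume "z \<in> fst ` Q"
    then obtain d where "(z, (i, d)) \<in> M" "d \<in> {1..m}" unfolding Q_def by auto
    then show "z \<in> {0..<m}"
      using no_dummy that by (meson atLeastLessThan_iff le0 not_le)
  qed
  ultimately have "fst ` Q = {0..<m}"
    by (intro card_subset_eq) auto
  then obtain d where "(h, (i, d)) \<in> M"
    using h(2) unfolding Q_def by force
  then show False
    using single_valuedD[OF sv(1) h(1)] \<open>j \<noteq> i\<close> by blast
qed

lemma predecessor_bucket_real:
  assumes max: "max_weight_perfect_matching n m likes vv M"
    and "i \<noteq> j" and h: "(h, (j, Suc c)) \<in> M" "h < m" "likes i h" and "1 \<le> c"
    and y: "(y, (i, c)) \<in> M"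
  shows "y < m"
proof (rule ccontr)
  assume "\<not> y < m"
  \<comment> \<open>Then swapping h and the dummy y moves h one bucket down.\<close>
  have pm: "perfect_matching n m likes M"
    using max by (simp add: max_weight_perfect_matching_def)
  note h_edge = perfect_matching_edge[OF pm h(1)] and y_edge = perfect_matching_edge[OF pm y]
  define R where "R = {(h, (j, Suc c)), (y, (i, c))}"
  define A where "A = {(h, (i, c)), (y, (j, Suc c))}"
  have "h \<noteq> y" using \<open>\<not> y < m\<close> h(2) by auto
  have "matching_weight m vv A \<le> matching_weight m vv R"
  proof (rule max_weight_exchange_le[OF max])
    show "A \<subseteq> edges n m likes"
      using h_edge y_edge h \<open>1 \<le> c\<close> \<open>\<not> y < m\<close> by (auto simp: A_def edges_iff)
  qed (use h y \<open>h \<noteq> y\<close> \<open>i \<noteq> j\<close> in \<open>auto simp: A_def R_def single_valued_def\<close>)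
  moreover have "matching_weight m vv R = - (item_weight m vv h * real (Suc c))"
    "matching_weight m vv A = - (item_weight m vv h * real c)"
    using \<open>h \<noteq> y\<close> h(2) \<open>\<not> y < m\<close>
    by (simp_all add: R_def A_def matching_weight_def edge_weight_eq)
  ultimately show False
    using item_weight_pos[of m vv h] h(2) by (simp add: algebra_simps)
qed

lemma predecessor_bucket_dominates:
  assumes max: "max_weight_perfect_matching n m likes vv M"
    and "i \<noteq> j" and h: "(h, (j, Suc c)) \<in> M" "h < m" "likes i h" and "1 \<le> c"
    and y: "(y, (i, c)) \<in> M" "y < m"
  shows "vv h \<le> vv y"
proof (rule ccontr)
  assume "\<not> vv h \<le> vv y"
  \<comment> \<open>Then the 3-cycle h \<mapsto> (i,c), y \<mapsto> (i,d), z \<mapsto> (j,c+1) through a dummy z of i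
    gains item_weight h and loses at most (m-1) * item_weight y.\<close>
  then have gap: "real m * item_weight m vv y \<le> item_weight m vv h"
    using item_weight_gap[OF y(2) h(2)] by simp
  have pm: "perfect_matching n m likes M"
    using max by (simp add: max_weight_perfect_matching_def)
  note h_edge = perfect_matching_edge[OF pm h(1)] and y_edge = perfect_matching_edge[OF pm y(1)]
  obtain z d where z: "(z, (i, d)) \<in> M" "m \<le> z" "d \<in> {1..m}"
    using perfect_matching_dummy_bucket[OF pm _ h(1,2)] h_edge y_edge \<open>i \<noteq> j\<close> by metis
  note z_edge = perfect_matching_edge[OF pm z(1)]
  have "z \<noteq> h" "z \<noteq> y" using z(2) h(2) y(2) by auto
  have "h \<noteq> y" using single_valuedD[of M h] h(1) y(1) \<open>i \<noteq> j\<close> pm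
    by (auto simp: perfect_matching_iff)
  have "d \<noteq> c" using single_valuedD[of "M\<inverse>" "(i, c)" y z] y z(1,2) pm
    by (auto simp: perfect_matching_iff)
  define R where "R = {(h, (j, Suc c)), (y, (i, c)), (z, (i, d))}"
  define A where "A = {(h, (i, c)), (y, (i, d)), (z, (j, Suc c))}"
  have "matching_weight m vv A \<le> matching_weight m vv R"
  proof (rule max_weight_exchange_le[OF max])
    show "A \<subseteq> edges n m likes"
      using h_edge y_edge z_edge h y z \<open>1 \<le> c\<close> by (auto simp: A_def edges_iff)
  qed (use h y z \<open>h \<noteq> y\<close> \<open>z \<noteq> h\<close> \<open>z \<noteq> y\<close> \<open>d \<noteq> c\<close> \<open>i \<noteq> j\<close>
       in \<open>auto simp: A_def R_def single_valued_def\<close>)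
  moreover have "matching_weight m vv R =
      - (item_weight m vv h * real (Suc c)) - item_weight m vv y * real c"
    "matching_weight m vv A = - (item_weight m vv h * real c) - item_weight m vv y * real d"
    using \<open>h \<noteq> y\<close> \<open>z \<noteq> h\<close> \<open>z \<noteq> y\<close> h(2) y(2) z(2)
    by (simp_all add: R_def A_def matching_weight_def edge_weight_eq)
  ultimately have "item_weight m vv h + item_weight m vv y * real c \<le> item_weight m vv y * real d"
    by (simp add: algebra_simps)
  moreover have "item_weight m vv y * real d \<le> real m * item_weight m vv y"
    using z(3) item_weight_pos[of m vv y] y(2) by simp
  moreover have "item_weight m vv y \<le> item_weight m vv y * real c"
    using \<open>1 \<le> c\<close> item_weight_pos[of m vv y] y(2) by simp
  ultimately show False
    using gap item_weight_pos[of m vv y] y(2) by linarith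
qed

lemma bundle_val_eq_sum_liked:
  "finite S \<Longrightarrow> bundle_val likes vv i S = sum vv {g \<in> S. likes i g}"
  by (simp add: bundle_val_def val_def sum.inter_filter)

lemma finite_induced_alloc: "finite (induced_alloc m M i)"
  by (rule finite_subset[of _ "{0..<m}"]) (auto simp: induced_alloc_def)

lemma induced_alloc_liked:
  "perfect_matching n m likes M \<Longrightarrow> g \<in> induced_alloc m M i \<Longrightarrow> likes i g"
  using perfect_matching_edge by (fastforce simp: induced_alloc_def)

lemma envy_up_to_first_bucket:
  assumes pos: "\<forall>g<m. vv g > 0" and max: "max_weight_perfect_matching n m likes vv M"
    and "i < n" "i \<noteq> j"
  defines "X \<equiv> induced_alloc m M"
  shows "bundle_val likes vv i (X j - {h. (h, (j, 1)) \<in> M}) \<le> bundle_val likes vv i (X i)"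
proof -
  have pm: "perfect_matching n m likes M"
    using max by (simp add: max_weight_perfect_matching_def)
  define T where "T = {h \<in> X j - {h. (h, (j, 1)) \<in> M}. likes i h}"
  have "\<exists>y c. (h, (j, Suc c)) \<in> M \<and> (y, (i, c)) \<in> M \<and> y \<in> X i \<and> vv h \<le> vv y" if hT: "h \<in> T" for h
  proof -
    obtain c' where h: "(h, (j, c')) \<in> M" "h < m" "likes i h" "(h, (j, 1)) \<notin> M"
      using hT unfolding T_def X_def induced_alloc_def by blast
    have "c' \<in> {1..m}" "c' \<noteq> 1"
      using perfect_matching_edge[OF pm h(1)] h(1,4) by auto
    then obtain c where c: "c' = Suc c" "1 \<le> c" "c \<in> {1..m}"
      by (cases c') auto
    obtain y where y: "(y, (i, c)) \<in> M"
      using perfect_matching_bucket_matched[OF pm \<open>i < n\<close> c(3)] .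
    have "y < m"
      using predecessor_bucket_real[OF max \<open>i \<noteq> j\<close> _ h(2,3) c(2) y] h(1) c(1) by simp
    moreover have "vv h \<le> vv y"
      using predecessor_bucket_dominates[OF max \<open>i \<noteq> j\<close> _ h(2,3) c(2) y \<open>y < m\<close>] h(1) c(1)
      by simp
    ultimately show ?thesis
      using h(1) c(1) y unfolding X_def induced_alloc_def by blast
  qed
  then obtain \<phi> where \<phi>: "\<And>h. h \<in> T \<Longrightarrow>
      \<exists>c. (h, (j, Suc c)) \<in> M \<and> (\<phi> h, (i, c)) \<in> M \<and> \<phi> h \<in> X i \<and> vv h \<le> vv (\<phi> h)"
    by metis
  have sv: "single_valued M" "single_valued (M\<inverse>)"
    using pm by (auto simp: perfect_matching_iff)
  have "inj_on \<phi> T"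
  proof (rule inj_onI)
    fix h h' assume "h \<in> T" "h' \<in> T" "\<phi> h = \<phi> h'"
    then obtain c c' where "(h, (j, Suc c)) \<in> M" "(\<phi> h, (i, c)) \<in> M"
      "(h', (j, Suc c')) \<in> M" "(\<phi> h, (i, c')) \<in> M"
      using \<phi> by metis
    then show "h = h'"
      using single_valuedD[OF sv(1)] single_valuedD[OF sv(2), simplified] by blast
  qed
  have "bundle_val likes vv i (X j - {h. (h, (j, 1)) \<in> M}) = sum vv T"
    unfolding T_def X_def using finite_induced_alloc by (simp add: bundle_val_eq_sum_liked)
  also have "\<dots> \<le> sum (vv \<circ> \<phi>) T"
    using \<phi> by (auto intro: sum_mono)
  also have "\<dots> = sum vv (\<phi> ` T)"
    by (simp add: sum.reindex \<open>inj_on \<phi> T\<close>)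
  also have "\<dots> \<le> sum vv (X i)"
    using \<phi> pos unfolding X_def induced_alloc_def
    by (intro sum_mono2) (auto simp: finite_induced_alloc[unfolded induced_alloc_def] less_imp_le)
  also have "\<dots> = bundle_val likes vv i (X i)"
  proof -
    have "{g \<in> X i. likes i g} = X i"
      using induced_alloc_liked[OF pm] unfolding X_def by blast
    then show ?thesis
      unfolding X_def by (simp add: bundle_val_eq_sum_liked finite_induced_alloc)
  qed
  finally show ?thesis .
qed

theorem mainTheorem10:
  fixes n m :: nat and likes :: "nat \<Rightarrow> nat \<Rightarrow> bool" and vv :: "nat \<Rightarrow> real"
    and M :: "(nat \<times> (nat \<times> nat)) set"
  assumes pos: "\<forall>g<m. vv g > 0"
    and liked: "\<forall>g<m. \<exists>i<n. likes i g"
    and maxM: "max_weight_perfect_matching n m likes vv M"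
  shows "EF1 n likes vv (induced_alloc m M)"
  \<comment> \<open>liked only ensures that a perfect matching exists.\<close>
  unfolding EF1_def
proof (intro allI impI)
  fix i j assume "i < n" "j < n"
  let ?X = "induced_alloc m M" and ?v = "bundle_val likes vv i"
  show "?v (?X j) \<le> ?v (?X i) \<or> (\<exists>g\<in>?X j. ?v (?X j - {g}) \<le> ?v (?X i))"
  proof (cases "i = j")
    case False
    have envy: "?v (?X j - {h. (h, (j, 1)) \<in> M}) \<le> ?v (?X i)"
      using envy_up_to_first_bucket[OF pos maxM \<open>i < n\<close> False] .
    show ?thesis
    proof (cases "\<exists>g\<in>?X j. (g, (j, 1)) \<in> M")
      case True
      then obtain g where g: "g \<in> ?X j" "(g, (j, 1)) \<in> M" by blast
      have "single_valued (M\<inverse>)"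
        using maxM by (simp add: max_weight_perfect_matching_def perfect_matching_iff)
      then have "?X j - {h. (h, (j, 1)) \<in> M} = ?X j - {g}"
        using g(2) by (auto dest: single_valuedD[simplified])
      then show ?thesis using envy g(1) by auto
    next
      case False
      then have "?X j - {h. (h, (j, 1)) \<in> M} = ?X j" by blast
      then show ?thesis using envy by simp
    qed
  qed simp
qed

end
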